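(* Let $\mathbb K$ be a field, $n\ge2$, and $\mathcal G_n$, $\mathcal N_{0,n}$, $U_m(z_g)$ as in the context. If $f\in A_{\mathbb K}(\mathcal G_n)$, then there is $m\ge1$ such that, with $U_m=\bigcup_{g\in\mathcal N_{0,n}}U_m(z_g)$, the restriction $f|_{U_m}$ is a $\mathbb K$-linear combination of the characteristic functions $1_{U_m(z_g)}$, $g\in\mathcal N_{0,n}$.
   Context: Let $X=\{\mathbf 0,\mathbf 1\}$, $X^*$ the finite words (with empty word $\varnothing$), $X^\omega$ the infinite words, $C(\eta)=\{\eta w:w\in X^\omega\}$, $\mathbf 1^m$ and $\mathbf 1^\infty$ the finite/infinite words of ones. Fix $n\ge2$, a primitive polynomial $f_n$ of degree $n$ over $\mathbb F_2$ with root $\alpha$, and $\operatorname{Tr}(\beta)=\beta+\beta^2+\dots+\beta^{2^{n-1}}\in\mathbb F_2$. $\mathfrak G_n$ is the group of automorphisms of the binary rooted tree $X^*$ generated by $a$ ($a\cdot(\mathbf 0w)=\mathbf 1w$, $a\cdot(\mathbf 1w)=\mathbf 0w$) and $\iota_n(\beta)$, $\beta\in\mathbb F_{2^n}$, where $\iota_n(\beta)\cdot(\mathbf 0w)=\mathbf 0(a^{\operatorname{Tr}(\beta)}\cdot w)$, $\iota_n(\beta)\cdot(\mathbf 1w)=\mathbf 1(\iota_n(\alpha\beta)\cdot w)$; restrictions $g|_x$ are given by $g\cdot(xw)=(g\cdot x)(g|_x\cdot w)$. $\mathcal N_{0,n}=\iota_n(\mathbb F_{2^n})$. $\mathcal G_n$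 is the groupoid of germs of the action of the inverse semigroup $\{(\eta,g,\mu)\}\cup\{0\}$ on $X^\omega$ with $(\eta,g,\mu):C(\mu)\to C(\eta)$, $\mu w\mapsto\eta(g\cdot w)$; germs $[(\eta,g,\mu),w]$, $w\in C(\mu)$, with $[(\eta,g,\mu),w]=[(\eta',g',\mu'),w']$ iff $w=w'$ and some finite prefix $\nu=\mu\epsilon=\mu'\epsilon'$ of $w$ satisfies $\eta(g\cdot\epsilon)=\eta'(g'\cdot\epsilon')$ and $g|_\epsilon=g'|_{\epsilon'}$. $\Theta(s,U)=\{[s,w]:w\in U\}$ for $s=(\eta,g,\mu)$, $U\subseteq C(\mu)$ open; these form a basis of the topology. $z_g=[(\varnothing,g,\varnothing),\mathbf 1^\infty]$ and $U_m(z_g)=\Theta((\varnothing,g,\varnothing),C(\mathbf 1^m))$. $A_{\mathbb K}(\mathcal G_n)$ is the Steinberg algebra: the $\mathbb K$-span of characteristic functions of compact open bisections of $\mathcal G_n$. *)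

theory Defs
  imports "HOL-Analysis.Analysis"
begin

type_synonym fword = "bool list"          (* finite words over X = {0,1}; False = 0, True = 1 *)
type_synonym iword = "nat \<Rightarrow> bool"
type_synonym taut  = "fword \<Rightarrow> fword"  (* tree automorphisms, acting on finite words *)
type_synonym ismel = "fword \<times> taut \<times> fword"
type_synonym germ  = "(ismel \<times> iword) set"     (* germs as equivalence classes *)

fun flipa :: taut where
  "flipa [] = []"
| "flipa (b # w) = (\<not> b) # w"

definition trace :: "nat \<Rightarrow> 'f::field \<Rightarrow> 'f" where
  "trace n \<beta> = (\<Sum>i<n. \<beta> ^ (2 ^ i))"

fun iota :: "nat \<Rightarrow> 'f::field \<Rightarrow> 'f \<Rightarrow> taut" where
  "iota n \<alpha> \<beta> [] = []"
| "iota n \<alpha> \<beta> (False # w) = False # (if trace n \<beta> = 1 then flipa w else w)"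
| "iota n \<alpha> \<beta> (True # w) = True # iota n \<alpha> (\<alpha> * \<beta>) w"

inductive_set Ggrp :: "nat \<Rightarrow> 'f::field \<Rightarrow> taut set" for n \<alpha> where
  Gid: "id \<in> Ggrp n \<alpha>"
| Ga: "flipa \<in> Ggrp n \<alpha>"
| Giota: "iota n \<alpha> \<beta> \<in> Ggrp n \<alpha>"
| Gcomp: "g \<in> Ggrp n \<alpha> \<Longrightarrow> h \<in> Ggrp n \<alpha> \<Longrightarrow> g \<circ> h \<in> Ggrp n \<alpha>"
| Ginv: "g \<in> Ggrp n \<alpha> \<Longrightarrow> inv g \<in> Ggrp n \<alpha>"

definition N0 :: "nat \<Rightarrow> 'f::field \<Rightarrow> taut set" where
  "N0 n \<alpha> = range (iota n \<alpha>)"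

definition restr :: "taut \<Rightarrow> fword \<Rightarrow> taut" where
  "restr g x = (\<lambda>v. drop (length x) (g (x @ v)))"

definition stake :: "nat \<Rightarrow> iword \<Rightarrow> fword" where
  "stake k w = map w [0..<k]"

definition sdrop :: "nat \<Rightarrow> iword \<Rightarrow> iword" where
  "sdrop k w = (\<lambda>i. w (i + k))"

definition conc :: "fword \<Rightarrow> iword \<Rightarrow> iword" where
  "conc \<eta> w = (\<lambda>i. if i < length \<eta> then \<eta> ! i else w (i - length \<eta>))"

definition cyl :: "fword \<Rightarrow> iword set" where
  "cyl \<eta> = {w. \<forall>i < length \<eta>. w i = \<eta> ! i}"

definition ones :: iword where
  "ones = (\<lambda>_. True)"

definition gact :: "taut \<Rightarrow> iword \<Rightarrow> iword" where
  "gact g w = (\<lambda>i. g (stake (Suc i) w) ! i)"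

definition cantor_open :: "iword set \<Rightarrow> bool" where
  "cantor_open U \<longleftrightarrow> (\<forall>w\<in>U. \<exists>k. cyl (stake k w) \<subseteq> U)"

text \<open>Nonzero elements of the inverse semigroup.\<close>
definition ISem :: "nat \<Rightarrow> 'f::field \<Rightarrow> ismel set" where
  "ISem n \<alpha> = {(\<eta>, g, \<mu>). g \<in> Ggrp n \<alpha>}"

fun mu :: "ismel \<Rightarrow> fword" where
  "mu (\<eta>, g, \<mu>) = \<mu>"

text \<open>The partial map (eta,g,mu): C(mu) -> C(eta).\<close>
fun ismap :: "ismel \<Rightarrow> iword \<Rightarrow> iword" where
  "ismap (\<eta>, g, \<mu>) w = conc \<eta> (gact g (sdrop (length \<mu>) w))"

fun germ_rel :: "ismel \<times> iword \<Rightarrow> ismel \<times> iword \<Rightarrow> bool" where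
  "germ_rel ((\<eta>, g, \<mu>), w) ((\<eta>', g', \<mu>'), w') \<longleftrightarrow>
     w = w' \<and> (\<exists>k. length \<mu> \<le> k \<and> length \<mu>' \<le> k \<and>
        \<mu> = take (length \<mu>) (stake k w) \<and> \<mu>' = take (length \<mu>') (stake k w) \<and>
        (let \<epsilon> = drop (length \<mu>) (stake k w); \<epsilon>' = drop (length \<mu>') (stake k w) in
          \<eta> @ g \<epsilon> = \<eta>' @ g' \<epsilon>' \<and> restr g \<epsilon> = restr g' \<epsilon>'))"

definition germ :: "nat \<Rightarrow> 'f::field \<Rightarrow> ismel \<Rightarrow> iword \<Rightarrow> germ" where
  "germ n \<alpha> s w = {(s', w'). s' \<in> ISem n \<alpha> \<and> w' \<in> cyl (mu s') \<and> germ_rel (s', w') (s, w)}"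

definition Groupoid :: "nat \<Rightarrow> 'f::field \<Rightarrow> germ set" where
  "Groupoid n \<alpha> = {germ n \<alpha> s w | s w. s \<in> ISem n \<alpha> \<and> w \<in> cyl (mu s)}"

definition Theta :: "nat \<Rightarrow> 'f::field \<Rightarrow> ismel \<Rightarrow> iword set \<Rightarrow> germ set" where
  "Theta n \<alpha> s U = (\<lambda>w. germ n \<alpha> s w) ` U"

definition germ_basis :: "nat \<Rightarrow> 'f::field \<Rightarrow> germ set set" where
  "germ_basis n \<alpha> = {Theta n \<alpha> s U | s U. s \<in> ISem n \<alpha> \<and> U \<subseteq> cyl (mu s) \<and> cantor_open U}"

definition germ_top :: "nat \<Rightarrow> 'f::field \<Rightarrow> germ topology" where
  "germ_top n \<alpha> = topology_generated_by (germ_basis n \<alpha>)"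

definition src :: "germ \<Rightarrow> iword" where
  "src \<gamma> = (THE w. \<exists>s. (s, w) \<in> \<gamma>)"

definition rng :: "germ \<Rightarrow> iword" where
  "rng \<gamma> = (THE x. \<exists>s w. (s, w) \<in> \<gamma> \<and> x = ismap s w)"

definition compact_open_bisection :: "nat \<Rightarrow> 'f::field \<Rightarrow> germ set \<Rightarrow> bool" where
  "compact_open_bisection n \<alpha> B \<longleftrightarrow>
     B \<subseteq> Groupoid n \<alpha> \<and> openin (germ_top n \<alpha>) B \<and> compactin (germ_top n \<alpha>) B \<and>
     inj_on src B \<and> inj_on rng B"

definition steinberg :: "nat \<Rightarrow> 'f::field \<Rightarrow> (germ \<Rightarrow> 'k::field) set" where
  "steinberg n \<alpha> = {f. \<exists>(I :: nat set) c B. finite I \<and>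
      (\<forall>i\<in>I. compact_open_bisection n \<alpha> (B i)) \<and>
      f = (\<lambda>\<gamma>. \<Sum>i\<in>I. c i * indicator (B i) \<gamma>)}"

definition Um :: "nat \<Rightarrow> 'f::field \<Rightarrow> nat \<Rightarrow> taut \<Rightarrow> germ set" where
  "Um n \<alpha> m g = Theta n \<alpha> ([], g, []) (cyl (replicate m True))"

end

theory Submission
  imports Defs "HOL-Computational_Algebra.Primes"
begin

(* A function in the Steinberg algebra is a finite linear combination of indicators of compact
   open bisections B, so it suffices to show that, for all large m, the restriction of 1_B to U_m
   lies in the span of the indicators of the U_m(z_g).
   If B contains some z_g, then, being open, it contains U_m(z_g) for large m; all the U_m(z_h)
   have the same sources and B is a bisection, so 1_B agrees with the indicator of U_m(z_g) on U_m.
   Otherwise every germ [s, w] of B has a cylinder neighbourhood that misses U_m for large m: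
   either w or s w leaves 1^oo at some position, or s = (eta, g, mu) has nonzero degree
   |eta| - |mu|, which is an invariant of germs. The remaining germs, of degree 0 with s fixing 1^oo,
   are all of the form z_g, because the group contracts onto its nucleus {a} u N_{0,n} and the
   sections of N_{0,n} along 1^k are all of N_{0,n}. Compactness of B makes m uniform. *)

section \<open>Fields with \<open>2 ^ n\<close> elements\<close>

lemma power_card_eq_self:
  fixes x :: "'f::{field,finite}"
  shows "x ^ CARD('f) = x"
proof (cases "x = 0")
  case False
  let ?U = "UNIV - {0::'f}"
  have "(\<Prod>y\<in>?U. x * y) = (\<Prod>y\<in>?U. y)"
    by (rule prod.reindex_bij_witness[of _ "\<lambda>y. y / x" "\<lambda>y. x * y"]) (use False in auto)
  then have "x ^ card ?U = 1"
    by (simp add: prod.distrib)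
  moreover have "card ?U = CARD('f) - 1"
    by (simp add: card_Diff_subset)
  ultimately show ?thesis
    using finite_UNIV_card_ge_0[where 'a='f] by (cases "CARD('f)") auto
qed (simp add: finite_UNIV_card_ge_0)

lemma generator_nonzero:
  fixes \<alpha> :: "'f::{field,finite}"
  assumes "2 < CARD('f)" and "\<forall>x::'f. x \<noteq> 0 \<longrightarrow> (\<exists>k. x = \<alpha> ^ k)"
  shows "\<alpha> \<noteq> 0"
proof
  assume "\<alpha> = 0"
  have "x \<in> {0, 1}" for x :: 'f
  proof (cases "x = 0")
    case False
    then obtain k where "x = \<alpha> ^ k" using assms(2) by blast
    with \<open>\<alpha> = 0\<close> show ?thesis by (cases k) auto
  qed simp
  then have "CARD('f) \<le> card {0::'f, 1}"
    by (intro card_mono) auto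
  also have "\<dots> = 2" by simp
  finally show False using assms(1) by simp
qed

locale gf2n =
  fixes n :: nat and \<alpha> :: "'f::{field,finite}"
  assumes card_eq: "CARD('f) = 2 ^ n" and n_pos: "0 < n"
begin

lemma CHAR_eq_2: "CHAR('f) = 2"
proof (rule CHAR_eq_posI)
  have "(-1::'f) = (-1) ^ CARD('f)" by (rule power_card_eq_self[symmetric])
  also have "\<dots> = 1" using card_eq n_pos by simp
  finally show "of_nat 2 = (0::'f)" by (simp add: eq_neg_iff_add_eq_0)
qed (auto simp: less_2_cases_iff)

lemma one_plus_one: "(1::'f) + 1 = 0"
  using of_nat_CHAR[where 'a='f] by (simp add: CHAR_eq_2)

lemma trace_add: "trace n (x + y) = trace n x + trace n (y::'f)"
proof -
  have "(x + y) ^ (2 ^ i) = x ^ (2 ^ i) + y ^ (2 ^ i)" for i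
    by (rule freshmans_dream') (simp_all add: CHAR_eq_2)
  then show ?thesis by (simp add: trace_def sum.distrib)
qed

lemma trace_square: "trace n x ^ 2 = trace n (x::'f)"
proof -
  have "trace n x ^ 2 = (\<Sum>i<n. (x ^ 2 ^ i) ^ 2)"
    unfolding trace_def by (rule freshmans_dream_sum) (simp_all add: CHAR_eq_2)
  also have "\<dots> = (\<Sum>i<n. x ^ 2 ^ Suc i)"
    by (simp add: power_mult[symmetric] mult.commute)
  also have "\<dots> = trace n x"
    using sum.lessThan_Suc_shift[of "\<lambda>i. x ^ 2 ^ i" n] sum.lessThan_Suc[of "\<lambda>i. x ^ 2 ^ i" n]
      power_card_eq_self[of x] card_eq
    by (simp add: trace_def add.commute)
  finally show ?thesis .
qed

lemma trace_0_or_1: "trace n x = 0 \<or> trace n (x::'f) = 1"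
proof -
  have "trace n x * (trace n x - 1) = 0"
    using trace_square[of x] by (simp add: power2_eq_square algebra_simps)
  then show ?thesis by simp
qed

lemma trace_add_eq_1_iff: "trace n (x + y) = 1 \<longleftrightarrow> (trace n x = 1) \<noteq> (trace n (y::'f) = 1)"
  using trace_0_or_1[of x] trace_0_or_1[of y] one_plus_one by (auto simp: trace_add)

end

section \<open>Tree automorphisms and their sections\<close>

definition tree_aut :: "taut \<Rightarrow> bool" where
  "tree_aut g \<longleftrightarrow> bij g \<and> (\<forall>x. length (g x) = length x) \<and> (\<forall>k x. g (take k x) = take k (g x))"

lemma tree_aut_length: "tree_aut g \<Longrightarrow> length (g x) = length x"
  by (simp add: tree_aut_def)

lemma tree_aut_take: "tree_aut g \<Longrightarrow> g (take k x) = take k (g x)"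
  by (simp add: tree_aut_def)

lemma tree_aut_bij: "tree_aut g \<Longrightarrow> bij g"
  by (simp add: tree_aut_def)

lemma tree_aut_inv_cancel: "tree_aut g \<Longrightarrow> g (inv g x) = x" "tree_aut g \<Longrightarrow> inv g (g x) = x"
  by (simp_all add: tree_aut_bij bij_is_surj bij_is_inj surj_f_inv_f)

lemma tree_aut_append:
  assumes "tree_aut g" shows "g (x @ v) = g x @ restr g x v"
proof -
  have "take (length x) (g (x @ v)) = g x"
    using tree_aut_take[OF assms, of "length x" "x @ v"] by simp
  then show ?thesis
    unfolding restr_def by (metis append_take_drop_id)
qed

lemma tree_aut_id: "tree_aut id"
  by (simp add: tree_aut_def)

lemma tree_aut_comp: "tree_aut g \<Longrightarrow> tree_aut h \<Longrightarrow> tree_aut (g \<circ> h)"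
  by (simp add: tree_aut_def bij_comp)

lemma tree_aut_inv:
  assumes "tree_aut g" shows "tree_aut (inv g)"
proof -
  have "length (inv g x) = length x" for x
  proof -
    have "length (g (inv g x)) = length (inv g x)" by (rule tree_aut_length[OF assms])
    then show ?thesis by (simp only: tree_aut_inv_cancel[OF assms])
  qed
  moreover have "inv g (take k x) = take k (inv g x)" for k x
  proof -
    have "g (take k (inv g x)) = take k x"
      by (simp only: tree_aut_take[OF assms] tree_aut_inv_cancel[OF assms])
    then have "inv g (g (take k (inv g x))) = inv g (take k x)" by (rule arg_cong)
    then show ?thesis by (simp only: tree_aut_inv_cancel[OF assms])
  qed
  ultimately show ?thesis
    unfolding tree_aut_def using bij_imp_bij_inv[OF tree_aut_bij[OF assms]] by blast
qed

lemma restr_Nil [simp]: "restr g [] = g"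
  by (simp add: restr_def)

lemma restr_append: "restr g (x @ y) = restr (restr g x) y"
  by (auto simp: restr_def add.commute)

lemma restr_comp:
  assumes "tree_aut h" shows "restr (g \<circ> h) x = restr g (h x) \<circ> restr h x"
proof
  fix v
  have "restr (g \<circ> h) x v = drop (length x) (g (h (x @ v)))"
    by (simp add: restr_def)
  also have "h (x @ v) = h x @ restr h x v"
    by (rule tree_aut_append[OF assms])
  also have "drop (length x) (g (h x @ restr h x v)) = restr g (h x) (restr h x v)"
    by (simp add: restr_def tree_aut_length[OF assms])
  finally show "restr (g \<circ> h) x v = (restr g (h x) \<circ> restr h x) v" by (simp add: comp_def)
qed

lemma tree_aut_restr:
  assumes "tree_aut g" shows "tree_aut (restr g x)"
proof -
  have inj: "inj g" and surj: "surj g" using tree_aut_bij[OF assms] by (simp_all add: bij_is_inj bij_is_surj)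
  have "inj (restr g x)"
  proof
    fix u v assume "restr g x u = restr g x v"
    then have "g (x @ u) = g (x @ v)" by (simp add: tree_aut_append[OF assms])
    then show "u = v" using inj by (simp add: inj_eq)
  qed
  moreover have "u \<in> range (restr g x)" for u
  proof -
    obtain z where gz: "g z = g x @ u" using surj by (metis surjD)
    have "g (take (length x) z) = g x"
      using gz by (simp add: tree_aut_take[OF assms] tree_aut_length[OF assms])
    then have "take (length x) z = x" using inj by (simp add: inj_eq)
    then have "z = x @ drop (length x) z" by (metis append_take_drop_id)
    then have "g x @ restr g x (drop (length x) z) = g x @ u"
      using gz tree_aut_append[OF assms, of x "drop (length x) z"] by simp
    then show ?thesis by (metis rangeI same_append_eq)
  qed
  moreover have "restr g x (take k v) = take k (restr g x v)" for k v
    using tree_aut_take[OF assms, of "length x + k" "x @ v"] by (simp add: restr_def drop_take)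
  moreover have "length (restr g x v) = length v" for v
    by (simp add: restr_def tree_aut_length[OF assms])
  ultimately show ?thesis
    by (auto simp: tree_aut_def bij_def)
qed

lemma restr_inv:
  assumes "tree_aut g" shows "restr (inv g) x = inv (restr g (inv g x))"
proof
  fix v
  define y where "y = inv g x"
  define u where "u = inv (restr g y) v"
  have "g y = x"
    unfolding y_def by (rule tree_aut_inv_cancel[OF assms])
  moreover have "restr g y u = v"
    unfolding u_def by (rule tree_aut_inv_cancel[OF tree_aut_restr[OF assms]])
  ultimately have "g (y @ u) = x @ v" by (simp add: tree_aut_append[OF assms])
  then have "inv g (x @ v) = y @ u"
    by (metis tree_aut_inv_cancel(2)[OF assms])
  moreover have "length y = length x"
    using \<open>g y = x\<close> tree_aut_length[OF assms, of y] by simp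
  ultimately show "restr (inv g) x v = inv (restr g (inv g x)) v"
    by (simp add: restr_def u_def y_def)
qed

lemma restr_id [simp]: "restr id x = id"
  by (auto simp: restr_def)

lemma tree_autI_involution:
  "g \<circ> g = id \<Longrightarrow> (\<And>x. length (g x) = length x) \<Longrightarrow> (\<And>k x. g (take k x) = take k (g x)) \<Longrightarrow>
    tree_aut g"
  by (simp add: tree_aut_def o_bij)

lemma flipa_flipa [simp]: "flipa (flipa w) = w"
  by (cases w) auto

lemma tree_aut_flipa: "tree_aut flipa"
proof (rule tree_autI_involution)
  show "length (flipa x) = length x" for x by (cases x) auto
  show "flipa (take k x) = take k (flipa x)" for k x by (cases x; cases k) auto
qed auto

lemma restr_flipa: "x \<noteq> [] \<Longrightarrow> restr flipa x = id"
  by (cases x) (auto simp: restr_def)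

lemma length_iota [simp]: "length (iota n \<alpha> \<beta> x) = length x"
  by (induction n \<alpha> \<beta> x rule: iota.induct) (auto simp: tree_aut_length[OF tree_aut_flipa])

lemma iota_iota [simp]: "iota n \<alpha> \<beta> (iota n \<alpha> \<beta> x) = x"
  by (induction n \<alpha> \<beta> x rule: iota.induct) auto

lemma tree_aut_iota: "tree_aut (iota n \<alpha> \<beta>)"
proof (rule tree_autI_involution)
  show "iota n \<alpha> \<beta> \<circ> iota n \<alpha> \<beta> = id" by auto
  show "iota n \<alpha> \<beta> (take k x) = take k (iota n \<alpha> \<beta> x)" for k x
    by (induction n \<alpha> \<beta> x arbitrary: k rule: iota.induct)
      (auto simp: take_Cons' tree_aut_take[OF tree_aut_flipa])
qed simp

lemma restr_iota_False: "restr (iota n \<alpha> \<beta>) [False] = (if trace n \<beta> = 1 then flipa else id)"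
  by (auto simp: restr_def)

lemma restr_iota_True: "restr (iota n \<alpha> \<beta>) [True] = iota n \<alpha> (\<alpha> * \<beta>)"
  by (auto simp: restr_def)

lemma iota_zero: "iota n \<alpha> (0::'f::field) = id"
proof
  have "\<beta> = 0 \<Longrightarrow> iota n \<alpha> \<beta> x = x" for \<beta> :: 'f and x
    by (induction n \<alpha> \<beta> x rule: iota.induct) (auto simp: trace_def power_0_left)
  then show "iota n \<alpha> 0 x = id x" for x by simp
qed

lemma Ggrp_tree_aut: "g \<in> Ggrp n \<alpha> \<Longrightarrow> tree_aut g"
  by (induction rule: Ggrp.induct)
    (blast intro: tree_aut_id tree_aut_flipa tree_aut_iota tree_aut_comp tree_aut_inv)+

section \<open>Contraction onto the nucleus\<close>

definition nucleus :: "nat \<Rightarrow> 'f::field \<Rightarrow> taut set" where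
  "nucleus n \<alpha> = insert flipa (N0 n \<alpha>)"

lemma id_in_nucleus: "id \<in> nucleus n (\<alpha>::'f::field)"
  using iota_zero[of n \<alpha>] by (auto simp: nucleus_def N0_def intro: range_eqI[of _ _ 0])

lemma nucleus_tree_aut: "u \<in> nucleus n \<alpha> \<Longrightarrow> tree_aut u"
  by (auto simp: nucleus_def N0_def tree_aut_flipa tree_aut_iota)

lemma nucleus_inv:
  assumes "u \<in> nucleus n \<alpha>" shows "inv u = u"
proof -
  have "u \<circ> u = id"
    using assms by (auto simp: nucleus_def N0_def fun_eq_iff)
  from this this show ?thesis by (rule inv_unique_comp)
qed

lemma restr_letter_in_nucleus: "u \<in> nucleus n \<alpha> \<Longrightarrow> restr u [b] \<in> nucleus n \<alpha>"
  using id_in_nucleus[of n \<alpha>]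
  by (cases b) (auto simp: nucleus_def N0_def restr_flipa restr_iota_False restr_iota_True)

lemma restr_in_nucleus: "u \<in> nucleus n \<alpha> \<Longrightarrow> restr u x \<in> nucleus n \<alpha>"
proof (induction x arbitrary: u)
  case (Cons b x)
  then show ?case
    using restr_append[of u "[b]" x] restr_letter_in_nucleus by fastforce
qed simp

context gf2n
begin

lemma iota_comp_iota: "iota n \<alpha> x \<circ> iota n \<alpha> y = iota n \<alpha> (x + y)"
proof
  fix w show "(iota n \<alpha> x \<circ> iota n \<alpha> y) w = iota n \<alpha> (x + y) w"
  proof (induction w arbitrary: x y)
    case (Cons b w)
    then show ?case
      using trace_add_eq_1_iff[of x y] by (cases b) (auto simp: distrib_left)
  qed simp
qed

lemma restr_letter_comp_in_nucleus:
  assumes "u \<in> nucleus n \<alpha>" "v \<in> nucleus n \<alpha>"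
  shows "restr (u \<circ> v) [b] \<in> nucleus n \<alpha>"
proof -
  have split: "restr (u \<circ> v) [b] = restr u (v [b]) \<circ> restr v [b]"
    using assms(2) by (intro restr_comp nucleus_tree_aut)
  have "v [b] \<noteq> []"
    using tree_aut_length[OF nucleus_tree_aut[OF assms(2)], of "[b]"] by auto
  consider "u = flipa" | "v = flipa" | x y where "u = iota n \<alpha> x" "v = iota n \<alpha> y"
    using assms by (auto simp: nucleus_def N0_def)
  then show ?thesis
  proof cases
    case 1
    then show ?thesis
      using split \<open>v [b] \<noteq> []\<close> restr_letter_in_nucleus[OF assms(2)] by (simp add: restr_flipa)
  next
    case 2
    then show ?thesis
      using split restr_letter_in_nucleus[OF assms(1)] by (simp add: restr_flipa)
  next
    case 3
    then have "u \<circ> v \<in> nucleus n \<alpha>"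
      by (simp add: iota_comp_iota nucleus_def N0_def)
    then show ?thesis by (rule restr_letter_in_nucleus)
  qed
qed

lemma Ggrp_contracting:
  assumes "g \<in> Ggrp n \<alpha>"
  shows "\<exists>J. \<forall>x. J \<le> length x \<longrightarrow> restr g x \<in> nucleus n \<alpha>"
  using assms
proof (induction rule: Ggrp.induct)
  case Gid
  then show ?case using id_in_nucleus[of n \<alpha>] by (simp add: id_def[symmetric])
next
  case Ga
  have "flipa \<in> nucleus n \<alpha>" by (simp add: nucleus_def)
  then show ?case by (intro exI[of _ 0] allI impI restr_in_nucleus)
next
  case (Giota \<beta>)
  have "iota n \<alpha> \<beta> \<in> nucleus n \<alpha>" by (simp add: nucleus_def N0_def)
  then show ?case by (intro exI[of _ 0] allI impI restr_in_nucleus)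
next
  case (Gcomp g h)
  then obtain Jg Jh where Jg: "\<And>x. Jg \<le> length x \<Longrightarrow> restr g x \<in> nucleus n \<alpha>"
    and Jh: "\<And>x. Jh \<le> length x \<Longrightarrow> restr h x \<in> nucleus n \<alpha>" by blast
  have "restr (g \<circ> h) x \<in> nucleus n \<alpha>" if "Suc (max Jg Jh) \<le> length x" for x
  proof -
    define y where "y = butlast x"
    have "x \<noteq> []" using that by auto
    then have x: "x = y @ [last x]" by (simp add: y_def)
    have "max Jg Jh \<le> length y" using that by (simp add: y_def, linarith)
    have aut_h: "tree_aut h" using Gcomp.hyps(2) by (rule Ggrp_tree_aut)
    \<comment> \<open>a product of two nucleus elements, restricted at one more letter\<close>
    have "restr (g \<circ> h) x = restr (restr g (h y) \<circ> restr h y) [last x]"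
      by (subst x) (simp add: restr_append restr_comp[OF aut_h])
    moreover have "restr g (h y) \<in> nucleus n \<alpha>" "restr h y \<in> nucleus n \<alpha>"
      using Jg Jh \<open>max Jg Jh \<le> length y\<close> by (simp_all add: tree_aut_length[OF aut_h])
    ultimately show ?thesis by (simp add: restr_letter_comp_in_nucleus)
  qed
  then show ?case by blast
next
  case (Ginv g)
  then obtain J where J: "\<And>x. J \<le> length x \<Longrightarrow> restr g x \<in> nucleus n \<alpha>" by blast
  have aut_g: "tree_aut g" using Ginv.hyps by (rule Ggrp_tree_aut)
  have "restr (inv g) x \<in> nucleus n \<alpha>" if "J \<le> length x" for x
  proof -
    have "restr g (inv g x) \<in> nucleus n \<alpha>"
      using J that by (simp add: tree_aut_length[OF tree_aut_inv[OF aut_g]])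
    then show ?thesis by (simp add: restr_inv[OF aut_g] nucleus_inv)
  qed
  then show ?case by blast
qed

end

lemma length_stake [simp]: "length (stake k w) = k"
  by (simp add: stake_def)

lemma nth_stake [simp]: "i < k \<Longrightarrow> stake k w ! i = w i"
  by (simp add: stake_def)

lemma stake_0 [simp]: "stake 0 w = []"
  by (simp add: stake_def)

lemma sdrop_apply [simp]: "sdrop k w i = w (i + k)"
  by (simp add: sdrop_def)

lemma stake_eq_iff: "stake k x = stake k w \<longleftrightarrow> (\<forall>i<k. x i = w i)"
  by (simp add: list_eq_iff_nth_eq)

lemma mem_cyl_iff_stake: "w \<in> cyl \<mu> \<longleftrightarrow> stake (length \<mu>) w = \<mu>"
  by (auto simp: cyl_def list_eq_iff_nth_eq)

lemma mem_cyl_replicate_iff: "x \<in> cyl (replicate m True) \<longleftrightarrow> (\<forall>i<m. x i)"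
  by (simp add: cyl_def)

lemma stake_ones [simp]: "stake k ones = replicate k True"
  by (simp add: stake_def ones_def map_replicate_const)

lemma sdrop_ones [simp]: "sdrop k ones = ones"
  by (simp add: sdrop_def ones_def)

lemma sdrop_conc: "sdrop (length \<eta>) (conc \<eta> y) = y"
  by (simp add: sdrop_def conc_def)

lemma cyl_Nil [simp]: "cyl [] = UNIV"
  by (simp add: cyl_def)

lemma cyl_stake_subset: "length \<mu> \<le> L \<Longrightarrow> w \<in> cyl \<mu> \<Longrightarrow> cyl (stake L w) \<subseteq> cyl \<mu>"
  by (auto simp: cyl_def)

lemma conc_Nil [simp]: "conc [] y = y"
  by (simp add: conc_def)

lemma sdrop_0 [simp]: "sdrop 0 x = x"
  by (simp add: sdrop_def)

lemma take_stake: "j \<le> k \<Longrightarrow> take j (stake k w) = stake j w"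
  by (simp add: stake_def take_map)

lemma drop_stake: "j \<le> k \<Longrightarrow> drop j (stake k w) = stake (k - j) (sdrop j w)"
  by (auto simp: list_eq_iff_nth_eq add.commute)

lemma stake_add: "stake (k + d) w = stake k w @ stake d (sdrop k w)"
  by (auto simp: list_eq_iff_nth_eq nth_append add.commute)

lemma stake_conc: "stake (length \<eta> + j) (conc \<eta> y) = \<eta> @ stake j y"
  by (auto simp: list_eq_iff_nth_eq nth_append conc_def)

lemma cantor_open_cyl: "cantor_open (cyl \<mu>)"
  unfolding cantor_open_def by (metis mem_cyl_iff_stake order_refl)

lemma stake_gact:
  assumes "tree_aut g" shows "stake k (gact g w) = g (stake k w)"
proof (rule nth_equalityI)
  fix i assume "i < length (stake k (gact g w))"
  then have "i < k" by simp
  then have "g (stake (Suc i) w) = take (Suc i) (g (stake k w))"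
    by (simp add: take_stake tree_aut_take[OF assms, symmetric])
  then show "stake k (gact g w) ! i = g (stake k w) ! i"
    using \<open>i < k\<close> by (simp add: gact_def)
qed (simp add: tree_aut_length[OF assms])

lemma stake_ismap:
  assumes "tree_aut g"
  shows "stake (length \<eta> + j) (ismap (\<eta>, g, \<mu>) w) = \<eta> @ g (stake j (sdrop (length \<mu>) w))"
  by (simp add: stake_conc stake_gact[OF assms])

section \<open>Germs\<close>

lemma Nil_Nil_mem_ISem [simp]: "([], g, []) \<in> ISem n \<alpha> \<longleftrightarrow> g \<in> Ggrp n \<alpha>"
  by (simp add: ISem_def)

(* If w = nu w' with nu = mu eps of length k, then (eta g(eps), g|_eps, nu) has the same germ at w
   as (eta, g, mu); expand_at records its first two components. *)
fun expand_at :: "nat \<Rightarrow> ismel \<Rightarrow> iword \<Rightarrow> fword \<times> taut" where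
  "expand_at k (\<eta>, g, \<mu>) w =
     (\<eta> @ g (drop (length \<mu>) (stake k w)), restr g (drop (length \<mu>) (stake k w)))"

definition agree_at :: "nat \<Rightarrow> ismel \<Rightarrow> ismel \<Rightarrow> iword \<Rightarrow> bool" where
  "agree_at k s s' w \<longleftrightarrow>
     length (mu s) \<le> k \<and> length (mu s') \<le> k \<and> expand_at k s w = expand_at k s' w"

lemma germ_rel_iff_agree_at:
  assumes "w \<in> cyl (mu s)" "w' \<in> cyl (mu s')"
  shows "germ_rel (s, w) (s', w') \<longleftrightarrow> w = w' \<and> (\<exists>k. agree_at k s s' w)"
proof -
  obtain \<eta> g \<mu> \<eta>' g' \<mu>' where s: "s = (\<eta>, g, \<mu>)" and s': "s' = (\<eta>', g', \<mu>')"
    by (cases s, cases s')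
  have "\<mu> = take (length \<mu>) (stake k w)" "\<mu>' = take (length \<mu>') (stake k w')"
    if "length \<mu> \<le> k" "length \<mu>' \<le> k" for k
    using assms that by (simp_all add: s s' take_stake mem_cyl_iff_stake)
  then show ?thesis
    by (auto simp: s s' agree_at_def Let_def)
qed

lemma agree_at_refl: "length (mu s) \<le> k \<Longrightarrow> agree_at k s s w"
  by (simp add: agree_at_def)

lemma agree_at_sym: "agree_at k s s' w \<Longrightarrow> agree_at k s' s w"
  by (auto simp: agree_at_def)

lemma agree_at_stake_cong: "stake k x = stake k w \<Longrightarrow> agree_at k s s' x \<longleftrightarrow> agree_at k s s' w"
  by (cases s; cases s') (simp add: agree_at_def)

lemma expand_at_add:
  assumes "tree_aut g" "length \<mu> \<le> k"
  shows "expand_at (k + d) (\<eta>, g, \<mu>) w =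
    (case expand_at k (\<eta>, g, \<mu>) w of (y, h) \<Rightarrow>
      (y @ h (stake d (sdrop k w)), restr h (stake d (sdrop k w))))"
proof -
  have "drop (length \<mu>) (stake (k + d) w) = drop (length \<mu>) (stake k w) @ stake d (sdrop k w)"
    using assms(2) by (simp add: stake_add)
  then show ?thesis
    by (simp add: tree_aut_append[OF assms(1)] restr_append)
qed

lemma agree_at_mono:
  assumes "s \<in> ISem n \<alpha>" "s' \<in> ISem n \<alpha>" "agree_at k s s' w" "k \<le> k'"
  shows "agree_at k' s s' w"
proof -
  obtain \<eta> g \<mu> \<eta>' g' \<mu>' where s: "s = (\<eta>, g, \<mu>)" and s': "s' = (\<eta>', g', \<mu>')"
    by (cases s, cases s')
  have "tree_aut g" "tree_aut g'"
    using assms(1,2) by (simp_all add: s s' ISem_def Ggrp_tree_aut)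
  moreover have "k' = k + (k' - k)" using assms(4) by simp
  ultimately show ?thesis
    using assms(3,4) expand_at_add[of g \<mu> k "k' - k" \<eta> w] expand_at_add[of g' \<mu>' k "k' - k" \<eta>' w]
    by (auto simp: s s' agree_at_def)
qed

lemma agree_at_trans:
  assumes "s1 \<in> ISem n \<alpha>" "s2 \<in> ISem n \<alpha>" "s3 \<in> ISem n \<alpha>"
    and "agree_at k1 s1 s2 w" "agree_at k2 s2 s3 w"
  shows "agree_at (max k1 k2) s1 s3 w"
  using agree_at_mono[OF assms(1,2,4), of "max k1 k2"] agree_at_mono[OF assms(2,3,5), of "max k1 k2"]
  by (auto simp: agree_at_def)

lemma length_fst_expand_at:
  "tree_aut g \<Longrightarrow> length (fst (expand_at k (\<eta>, g, \<mu>) w)) = length \<eta> + (k - length \<mu>)"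
  by (simp add: tree_aut_length)

lemma agree_at_degree:
  assumes "agree_at k (\<eta>, g, \<mu>) (\<eta>', g', \<mu>') w" "tree_aut g" "tree_aut g'"
  shows "length \<eta> + length \<mu>' = length \<eta>' + length \<mu>"
  using assms length_fst_expand_at[OF assms(2), of k \<eta> \<mu> w]
    length_fst_expand_at[OF assms(3), of k \<eta>' \<mu>' w]
  by (auto simp: agree_at_def)

lemma fst_expand_at:
  assumes "tree_aut g" "length \<mu> \<le> k"
  shows "fst (expand_at k (\<eta>, g, \<mu>) w) = stake (length \<eta> + (k - length \<mu>)) (ismap (\<eta>, g, \<mu>) w)"
  using stake_ismap[OF assms(1), of \<eta> "k - length \<mu>" \<mu> w] assms(2) by (simp add: drop_stake)

lemma ismap_eq_if_agree_at:
  assumes "s \<in> ISem n \<alpha>" "s' \<in> ISem n \<alpha>" "agree_at k s s' w"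
  shows "ismap s w = ismap s' w"
proof
  fix i
  obtain \<eta> g \<mu> \<eta>' g' \<mu>' where s: "s = (\<eta>, g, \<mu>)" and s': "s' = (\<eta>', g', \<mu>')"
    by (cases s, cases s')
  have aut: "tree_aut g" "tree_aut g'"
    using assms(1,2) by (simp_all add: s s' ISem_def Ggrp_tree_aut)
  define k' where "k' = k + Suc i"
  have agree: "agree_at k' s s' w"
    using agree_at_mono[OF assms] by (simp add: k'_def)
  define L where "L = length \<eta> + (k' - length \<mu>)"
  have "stake L (ismap s w) = stake (length \<eta>' + (k' - length \<mu>')) (ismap s' w)"
    using agree fst_expand_at[OF aut(1), of \<mu> k' \<eta> w] fst_expand_at[OF aut(2), of \<mu>' k' \<eta>' w]
    by (simp add: s s' agree_at_def L_def)
  then have "stake L (ismap s w) = stake L (ismap s' w)"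
    by (metis length_stake)
  moreover have "i < L"
    using assms(3) by (auto simp: s agree_at_def L_def k'_def)
  ultimately show "ismap s w i = ismap s' w i"
    by (metis nth_stake)
qed

lemma mem_germ_iff: "(p, x) \<in> germ n \<alpha> s w \<longleftrightarrow> p \<in> ISem n \<alpha> \<and> x \<in> cyl (mu p) \<and> germ_rel (p, x) (s, w)"
  by (simp add: germ_def)

lemma germ_eq_iff:
  assumes "s \<in> ISem n \<alpha>" "w \<in> cyl (mu s)" "s' \<in> ISem n \<alpha>" "w' \<in> cyl (mu s')"
  shows "germ n \<alpha> s w = germ n \<alpha> s' w' \<longleftrightarrow> w = w' \<and> (\<exists>k. agree_at k s s' w)"
proof
  assume eq: "germ n \<alpha> s w = germ n \<alpha> s' w'"
  have "(s, w) \<in> germ n \<alpha> s w"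
    using assms(1,2) agree_at_refl[of s] by (auto simp: mem_germ_iff germ_rel_iff_agree_at)
  then show "w = w' \<and> (\<exists>k. agree_at k s s' w)"
    using assms(2,4) by (auto simp: eq mem_germ_iff germ_rel_iff_agree_at)
next
  assume "w = w' \<and> (\<exists>k. agree_at k s s' w)"
  then obtain k where w': "w' = w" and agree: "agree_at k s s' w" by blast
  have "(\<exists>j. agree_at j p s w) \<longleftrightarrow> (\<exists>j. agree_at j p s' w)" if "p \<in> ISem n \<alpha>" for p
    using agree_at_trans[OF that assms(1,3) _ agree] agree_at_trans[OF that assms(3,1) _ agree_at_sym[OF agree]]
    by blast
  then show "germ n \<alpha> s w = germ n \<alpha> s' w'"
    using assms(2,4) by (auto simp: w' germ_def germ_rel_iff_agree_at)
qed

lemma src_germ: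
  assumes "s \<in> ISem n \<alpha>" "w \<in> cyl (mu s)"
  shows "src (germ n \<alpha> s w) = w"
  unfolding src_def
proof (rule the_equality)
  show "\<exists>p. (p, w) \<in> germ n \<alpha> s w"
    using assms agree_at_refl[of s]
    by (intro exI[of _ s]) (auto simp: mem_germ_iff germ_rel_iff_agree_at)
  show "\<exists>p. (p, x) \<in> germ n \<alpha> s w \<Longrightarrow> x = w" for x
    using assms(2) by (auto simp: mem_germ_iff germ_rel_iff_agree_at)
qed

lemma ismap_apply_stake_cong:
  assumes "s \<in> ISem n \<alpha>" "stake (length (mu s) + Suc p) x = stake (length (mu s) + Suc p) w"
  shows "ismap s x p = ismap s w p"
proof -
  obtain \<eta> g \<mu> where s: "s = (\<eta>, g, \<mu>)" by (cases s)
  have aut: "tree_aut g" using assms(1) by (simp add: s ISem_def Ggrp_tree_aut)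
  have "stake (Suc p) (sdrop (length \<mu>) x) = stake (Suc p) (sdrop (length \<mu>) w)"
    using assms(2) by (simp add: s stake_eq_iff)
  then have "stake (length \<eta> + Suc p) (ismap s x) ! p = stake (length \<eta> + Suc p) (ismap s w) ! p"
    unfolding s stake_ismap[OF aut] by simp
  then show ?thesis by simp
qed

section \<open>Neighbourhoods of the germs \<open>z\<^sub>g\<close>\<close>

lemma iota_replicate_True [simp]: "iota n \<alpha> \<beta> (replicate j True) = replicate j True"
  by (induction j arbitrary: \<beta>) auto

lemma restr_iota_replicate_True:
  "restr (iota n \<alpha> \<beta>) (replicate k True) = iota n \<alpha> (\<alpha> ^ k * \<beta>)"
proof (induction k arbitrary: \<beta>)
  case (Suc k)
  have "restr (iota n \<alpha> \<beta>) (replicate (Suc k) True) =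
      restr (restr (iota n \<alpha> \<beta>) [True]) (replicate k True)"
    using restr_append[of "iota n \<alpha> \<beta>" "[True]" "replicate k True"] by simp
  also have "\<dots> = iota n \<alpha> (\<alpha> ^ k * (\<alpha> * \<beta>))"
    by (simp only: restr_iota_True Suc.IH)
  also have "\<alpha> ^ k * (\<alpha> * \<beta>) = \<alpha> ^ Suc k * \<beta>"
    by (simp only: power_Suc2 mult.assoc)
  finally show ?case .
qed simp

lemma gact_iota_cyl:
  "x \<in> cyl (replicate m True) \<Longrightarrow> gact (iota n \<alpha> \<beta>) x \<in> cyl (replicate m True)"
  by (simp add: mem_cyl_iff_stake stake_gact[OF tree_aut_iota])

lemma mem_Um_iff: "\<gamma> \<in> Um n \<alpha> m g \<longleftrightarrow> (\<exists>x \<in> cyl (replicate m True). \<gamma> = germ n \<alpha> ([], g, []) x)"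
  by (auto simp: Um_def Theta_def)

lemma Um_antimono: "m \<le> m' \<Longrightarrow> Um n \<alpha> m' g \<subseteq> Um n \<alpha> m g"
  by (auto simp: Um_def Theta_def mem_cyl_replicate_iff)

lemma decseq_Um_union: "decseq (\<lambda>m. \<Union>g\<in>N0 n \<alpha>. Um n \<alpha> m g)"
  by (intro decseq_SucI UN_mono order_refl Um_antimono) simp

lemma openin_Theta:
  assumes "s \<in> ISem n \<alpha>" "U \<subseteq> cyl (mu s)" "cantor_open U"
  shows "openin (germ_top n \<alpha>) (Theta n \<alpha> s U)"
proof -
  have "Theta n \<alpha> s U \<in> germ_basis n \<alpha>"
    using assms unfolding germ_basis_def by blast
  then show ?thesis
    unfolding germ_top_def openin_topology_generated_by_iff by (rule generate_topology_on.Basis)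
qed

lemma Um_subset_Theta:
  assumes "s \<in> ISem n \<alpha>" "U \<subseteq> cyl (mu s)" "cantor_open U" "g \<in> Ggrp n \<alpha>"
    and "germ n \<alpha> ([], g, []) ones \<in> Theta n \<alpha> s U"
  shows "\<exists>m. Um n \<alpha> m g \<subseteq> Theta n \<alpha> s U"
proof -
  have z: "([], g, []) \<in> ISem n \<alpha>" using assms(4) by (simp add: ISem_def)
  have z_eq_iff: "germ n \<alpha> ([], g, []) x = germ n \<alpha> s w \<longleftrightarrow> x = w \<and> (\<exists>k. agree_at k ([], g, []) s x)"
    if "w \<in> U" for x w
    using germ_eq_iff[OF z _ assms(1)] that assms(2) by auto
  obtain w where w: "w \<in> U" "germ n \<alpha> ([], g, []) ones = germ n \<alpha> s w"
    using assms(5) by (auto simp: Theta_def)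
  then have "w = ones" "\<exists>k. agree_at k ([], g, []) s ones"
    using z_eq_iff[OF w(1), of ones] by simp_all
  then obtain k where agree: "agree_at k ([], g, []) s ones" by blast
  obtain j where j: "cyl (replicate j True) \<subseteq> U"
    using assms(3) w(1) \<open>w = ones\<close> unfolding cantor_open_def by auto
  have "germ n \<alpha> ([], g, []) x \<in> Theta n \<alpha> s U" if "x \<in> cyl (replicate (max k j) True)" for x
  proof -
    have "x \<in> U" using that j by (auto simp: mem_cyl_replicate_iff)
    have "stake k x = stake k ones"
      using that by (simp add: stake_eq_iff mem_cyl_replicate_iff ones_def)
    then have "agree_at k ([], g, []) s x"
      using agree agree_at_stake_cong by blast
    then have "germ n \<alpha> ([], g, []) x = germ n \<alpha> s x"
      using z_eq_iff \<open>x \<in> U\<close> by blast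
    then show ?thesis using \<open>x \<in> U\<close> by (simp add: Theta_def)
  qed
  then have "Um n \<alpha> (max k j) g \<subseteq> Theta n \<alpha> s U" by (auto simp: mem_Um_iff)
  then show ?thesis by blast
qed

lemma Um_subset_open:
  assumes "openin (germ_top n \<alpha>) B" "g \<in> Ggrp n \<alpha>" "germ n \<alpha> ([], g, []) ones \<in> B"
  shows "\<exists>m. Um n \<alpha> m g \<subseteq> B"
proof -
  have "generate_topology_on (germ_basis n \<alpha>) B"
    using assms(1) by (simp add: germ_top_def openin_topology_generated_by_iff)
  then show ?thesis
    using assms(3)
  proof (induction rule: generate_topology_on.induct)
    case (Int B1 B2)
    then obtain m1 m2 where "Um n \<alpha> m1 g \<subseteq> B1" "Um n \<alpha> m2 g \<subseteq> B2" by auto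
    then have "Um n \<alpha> (max m1 m2) g \<subseteq> B1 \<inter> B2"
      using Um_antimono[of m1 "max m1 m2" n \<alpha> g] Um_antimono[of m2 "max m1 m2" n \<alpha> g] by auto
    then show ?case by blast
  next
    case (UN K)
    then show ?case by blast
  next
    case (Basis B)
    then show ?case
      using Um_subset_Theta[OF _ _ _ assms(2)] by (auto simp: germ_basis_def)
  qed simp
qed

lemma Theta_meets_Um:
  assumes s: "s \<in> ISem n \<alpha>" "w \<in> cyl (mu s)" and L: "length (mu s) \<le> L"
    and meets: "Theta n \<alpha> s (cyl (stake L w)) \<inter> (\<Union>g\<in>N0 n \<alpha>. Um n \<alpha> M g) \<noteq> {}"
  shows "\<exists>x \<beta> k. stake L x = stake L w \<and> x \<in> cyl (replicate M True) \<and>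
    agree_at k s ([], iota n \<alpha> \<beta>, []) x"
proof -
  obtain x x' \<beta> where x: "x \<in> cyl (stake L w)" and x': "x' \<in> cyl (replicate M True)"
    and eq: "germ n \<alpha> s x = germ n \<alpha> ([], iota n \<alpha> \<beta>, []) x'"
    using meets by (auto simp: Theta_def mem_Um_iff N0_def)
  have "x \<in> cyl (mu s)" using cyl_stake_subset[OF L s(2)] x by blast
  then have "germ n \<alpha> s x = germ n \<alpha> ([], iota n \<alpha> \<beta>, []) x' \<longleftrightarrow>
      x = x' \<and> (\<exists>k. agree_at k s ([], iota n \<alpha> \<beta>, []) x)"
    by (intro germ_eq_iff s(1)) (simp_all add: Ggrp.Giota)
  then have "x = x' \<and> (\<exists>k. agree_at k s ([], iota n \<alpha> \<beta>, []) x)"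
    using eq by blast
  moreover have "stake L x = stake L w"
    using x mem_cyl_iff_stake[of x "stake L w"] by simp
  ultimately show ?thesis using x' by blast
qed

lemma compactin_disjoint_decseq:
  assumes "compactin X K" "decseq U"
    and "\<And>x. x \<in> K \<Longrightarrow> \<exists>V m. openin X V \<and> x \<in> V \<and> V \<inter> U m = {}"
  shows "\<exists>m. K \<inter> U m = {}"
proof -
  have "\<forall>x\<in>K. \<exists>p. openin X (fst p) \<and> x \<in> fst p \<and> fst p \<inter> U (snd p) = {}"
    using assms(3) by fastforce
  then obtain P where P: "\<forall>x\<in>K. openin X (fst (P x)) \<and> x \<in> fst (P x) \<and> fst (P x) \<inter> U (snd (P x)) = {}"
    by (rule bchoice[elim_format]) blast
  define V where "V = fst \<circ> P"
  define M where "M = snd \<circ> P"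
  have V: "openin X (V x)" "x \<in> V x" "V x \<inter> U (M x) = {}" if "x \<in> K" for x
    using P that by (simp_all add: V_def M_def)
  have "\<forall>B\<in>V ` K. openin X B" "K \<subseteq> \<Union>(V ` K)"
    using V by auto
  then obtain F where F: "finite F" "F \<subseteq> V ` K" "K \<subseteq> \<Union>F"
    using assms(1)[unfolded compactin_def, THEN conjunct2, rule_format, of "V ` K"] by blast
  obtain K' where "K' \<subseteq> K" "finite K'" "F = V ` K'"
    using finite_subset_image[OF F(1,2)] by blast
  then have K': "finite K'" "K' \<subseteq> K" "K \<subseteq> (\<Union>x\<in>K'. V x)"
    using F(3) by auto
  have "K \<inter> U (Max (M ` K')) = {}"
  proof (intro equalityI subsetI)
    fix y assume "y \<in> K \<inter> U (Max (M ` K'))"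
    then obtain x where "x \<in> K'" "y \<in> V x" "y \<in> U (Max (M ` K'))" using K'(3) by blast
    moreover have "U (Max (M ` K')) \<subseteq> U (M x)"
      using K'(1) \<open>x \<in> K'\<close> by (intro decseqD[OF assms(2)]) simp
    ultimately show "y \<in> {}" using V(3) K'(2) by blast
  qed simp
  then show ?thesis by blast
qed

section \<open>Indicators of compact open bisections near the \<open>z\<^sub>g\<close>\<close>

definition Um_spanned :: "nat \<Rightarrow> 'f::field \<Rightarrow> nat \<Rightarrow> (germ \<Rightarrow> 'k::field) \<Rightarrow> bool" where
  "Um_spanned n \<alpha> m h \<longleftrightarrow> (\<exists>d. \<forall>\<gamma> \<in> (\<Union>g\<in>N0 n \<alpha>. Um n \<alpha> m g).
     h \<gamma> = (\<Sum>g\<in>N0 n \<alpha>. d g * indicator (Um n \<alpha> m g) \<gamma>))"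

lemma Um_spanned_sum:
  assumes "finite I" "\<And>i. i \<in> I \<Longrightarrow> Um_spanned n \<alpha> m (h i)"
  shows "Um_spanned n \<alpha> m (\<lambda>\<gamma>. \<Sum>i\<in>I. c i * h i \<gamma>)"
  using assms
proof (induction I rule: finite_induct)
  case empty
  show ?case by (auto simp: Um_spanned_def intro!: exI[of _ "\<lambda>_. 0"])
next
  case (insert i I)
  have "Um_spanned n \<alpha> m (h i)" "Um_spanned n \<alpha> m (\<lambda>\<gamma>. \<Sum>i\<in>I. c i * h i \<gamma>)"
    using insert by simp_all
  then obtain d1 d2 where
    d1: "\<forall>\<gamma> \<in> (\<Union>g\<in>N0 n \<alpha>. Um n \<alpha> m g). h i \<gamma> = (\<Sum>g\<in>N0 n \<alpha>. d1 g * indicator (Um n \<alpha> m g) \<gamma>)" and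
    d2: "\<forall>\<gamma> \<in> (\<Union>g\<in>N0 n \<alpha>. Um n \<alpha> m g).
      (\<Sum>i\<in>I. c i * h i \<gamma>) = (\<Sum>g\<in>N0 n \<alpha>. d2 g * indicator (Um n \<alpha> m g) \<gamma>)"
    unfolding Um_spanned_def by (elim exE)
  show ?case
    unfolding Um_spanned_def using d1 d2 insert.hyps
    by (intro exI[of _ "\<lambda>g. c i * d1 g + d2 g"])
      (simp add: sum_distrib_left sum.distrib distrib_right mult.assoc)
qed

context gf2n
begin

context
  assumes alpha_nonzero: "\<alpha> \<noteq> 0"
begin

lemma germ_eq_z_if_fixes_ones:
  assumes s: "(\<eta>, g, \<mu>) \<in> ISem n \<alpha>" "ones \<in> cyl \<mu>"
    and fixes_ones: "ismap (\<eta>, g, \<mu>) ones = ones" and len: "length \<eta> = length \<mu>"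
  shows "\<exists>\<beta>. germ n \<alpha> (\<eta>, g, \<mu>) ones = germ n \<alpha> ([], iota n \<alpha> \<beta>, []) ones"
proof -
  have G: "g \<in> Ggrp n \<alpha>" using s(1) by (simp add: ISem_def)
  have aut: "tree_aut g" using G by (rule Ggrp_tree_aut)
  have conc: "conc \<eta> (gact g ones) = ones" using fixes_ones by simp
  have \<eta>: "\<eta> = replicate (length \<mu>) True"
    using stake_conc[of \<eta> 0 "gact g ones"] len by (simp add: conc)
  have "gact g ones = ones" using sdrop_conc[of \<eta> "gact g ones"] by (simp add: conc)
  then have g_rep: "g (replicate j True) = replicate j True" for j
    using stake_gact[OF aut, of j ones] by simp
  obtain J where J: "\<And>x. J \<le> length x \<Longrightarrow> restr g x \<in> nucleus n \<alpha>"
    using Ggrp_contracting[OF G] by blast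
  have "replicate J True @ [True] = replicate (Suc J) True"
    by (simp add: replicate_append_same)
  then have "restr g (replicate J True) [True] = drop J (replicate (Suc J) True)"
    by (simp only: restr_def g_rep length_replicate)
  also have "drop J (replicate (Suc J) True) = replicate (Suc J - J) True"
    by (rule drop_replicate)
  finally have "restr g (replicate J True) [True] = [True]" by simp
  then have "restr g (replicate J True) \<noteq> flipa" by auto
  then obtain \<beta>' where \<beta>': "restr g (replicate J True) = iota n \<alpha> \<beta>'"
    using J[of "replicate J True"] by (auto simp: nucleus_def N0_def)
  define k where "k = length \<mu> + J"
  \<comment> \<open>\<open>\<alpha> \<noteq> 0\<close>, so \<open>iota \<beta>'\<close> is the section of some \<open>iota \<beta>\<close> along \<open>1\<^sup>k\<close>\<close>
  define \<beta> where "\<beta> = \<beta>' / \<alpha> ^ k"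
  have "\<alpha> ^ k * \<beta> = \<beta>'" using alpha_nonzero by (simp add: \<beta>_def)
  moreover have "drop (length \<mu>) (replicate k True) = replicate J True"
    by (simp add: k_def)
  moreover have "\<eta> @ g (replicate J True) = replicate k True"
    by (simp add: \<eta> g_rep k_def replicate_add)
  moreover have "length \<mu> \<le> k" by (simp add: k_def)
  ultimately have "agree_at k (\<eta>, g, \<mu>) ([], iota n \<alpha> \<beta>, []) ones"
    by (simp add: agree_at_def \<beta>' restr_iota_replicate_True)
  moreover have "([], iota n \<alpha> \<beta>, []) \<in> ISem n \<alpha>" by (simp add: Ggrp.Giota)
  ultimately have "germ n \<alpha> (\<eta>, g, \<mu>) ones = germ n \<alpha> ([], iota n \<alpha> \<beta>, []) ones"
    using germ_eq_iff[OF s(1) _ _, of ones "([], iota n \<alpha> \<beta>, [])" ones] s(2) by auto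
  then show ?thesis by blast
qed

lemma Theta_disjoint_Um:
  assumes s: "s \<in> ISem n \<alpha>" "w \<in> cyl (mu s)"
    and not_z: "\<forall>\<beta>. germ n \<alpha> s w \<noteq> germ n \<alpha> ([], iota n \<alpha> \<beta>, []) ones"
  shows "\<exists>L M. length (mu s) \<le> L \<and> Theta n \<alpha> s (cyl (stake L w)) \<inter> (\<Union>g\<in>N0 n \<alpha>. Um n \<alpha> M g) = {}"
proof -
  obtain \<eta> g \<mu> where s_eq: "s = (\<eta>, g, \<mu>)" by (cases s)
  have aut: "tree_aut g" using s(1) by (simp add: s_eq ISem_def Ggrp_tree_aut)
  show ?thesis
  proof (cases "w = ones \<and> ismap s w = ones")
    \<comment> \<open>a 0 of \<open>w\<close> or \<open>s w\<close> at position \<open>p\<close> persists on a cylinder around \<open>w\<close>, whereas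
      sources and ranges of germs in \<open>U\<^sub>p\<^sub>+\<^sub>1(z\<^sub>g)\<close> begin with \<open>1\<^sup>p\<^sup>+\<^sup>1\<close>\<close>
    case False
    then obtain p where p: "\<not> w p \<or> \<not> ismap s w p" by (auto simp: ones_def fun_eq_iff)
    define L where "L = length \<mu> + Suc p"
    have L: "length (mu s) \<le> L" by (simp add: s_eq L_def)
    have "Theta n \<alpha> s (cyl (stake L w)) \<inter> (\<Union>g\<in>N0 n \<alpha>. Um n \<alpha> (Suc p) g) = {}"
    proof (rule ccontr)
      assume "Theta n \<alpha> s (cyl (stake L w)) \<inter> (\<Union>g\<in>N0 n \<alpha>. Um n \<alpha> (Suc p) g) \<noteq> {}"
      then obtain x \<beta> k where x: "stake L x = stake L w"
        "x \<in> cyl (replicate (Suc p) True)" "agree_at k s ([], iota n \<alpha> \<beta>, []) x"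
        using Theta_meets_Um[OF s L] by blast
      have "x p = w p" using x(1) by (simp add: stake_eq_iff L_def)
      moreover have "ismap s x p = ismap s w p"
        using x(1) by (intro ismap_apply_stake_cong[OF s(1)]) (simp add: s_eq L_def)
      moreover have "ismap s x = gact (iota n \<alpha> \<beta>) x"
        using ismap_eq_if_agree_at[OF s(1) _ x(3)] by (simp add: Ggrp.Giota)
      moreover have "x p" "gact (iota n \<alpha> \<beta>) x p"
        using mem_cyl_replicate_iff[THEN iffD1, OF x(2)]
          mem_cyl_replicate_iff[THEN iffD1, OF gact_iota_cyl[OF x(2), of n \<alpha> \<beta>]] by simp_all
      ultimately show False using p by simp
    qed
    then show ?thesis using L by blast
  next
    case True
    \<comment> \<open>degree 0 would make \<open>[s, 1\<^sup>\<infinity>]\<close> one of the \<open>z\<^sub>g\<close>, so the degree separates\<close>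
    then have w: "w = ones" "ismap s ones = ones" by auto
    have "length \<eta> \<noteq> length \<mu>"
    proof
      assume "length \<eta> = length \<mu>"
      moreover have "(\<eta>, g, \<mu>) \<in> ISem n \<alpha>" "ones \<in> cyl \<mu>" "ismap (\<eta>, g, \<mu>) ones = ones"
        using s w unfolding s_eq by simp_all
      ultimately obtain \<beta> where "germ n \<alpha> (\<eta>, g, \<mu>) ones = germ n \<alpha> ([], iota n \<alpha> \<beta>, []) ones"
        using germ_eq_z_if_fixes_ones by blast
      then show False using not_z unfolding s_eq w(1) by blast
    qed
    have L: "length (mu s) \<le> length \<mu>" by (simp add: s_eq)
    have "Theta n \<alpha> s (cyl (stake (length \<mu>) w)) \<inter> (\<Union>g\<in>N0 n \<alpha>. Um n \<alpha> 0 g) = {}"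
    proof (rule ccontr)
      assume "Theta n \<alpha> s (cyl (stake (length \<mu>) w)) \<inter> (\<Union>g\<in>N0 n \<alpha>. Um n \<alpha> 0 g) \<noteq> {}"
      then obtain x \<beta> k where "agree_at k (\<eta>, g, \<mu>) ([], iota n \<alpha> \<beta>, []) x"
        using Theta_meets_Um[OF s L] unfolding s_eq by blast
      from agree_at_degree[OF this aut tree_aut_iota] show False
        using \<open>length \<eta> \<noteq> length \<mu>\<close> by simp
    qed
    then show ?thesis using L by blast
  qed
qed

lemma bisection_disjoint_Um:
  assumes "compact_open_bisection n \<alpha> B" "\<forall>\<beta>. germ n \<alpha> ([], iota n \<alpha> \<beta>, []) ones \<notin> B"
  shows "\<exists>M. B \<inter> (\<Union>g\<in>N0 n \<alpha>. Um n \<alpha> M g) = {}"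
proof (rule compactin_disjoint_decseq[OF _ decseq_Um_union])
  show "compactin (germ_top n \<alpha>) B"
    using assms(1) by (simp add: compact_open_bisection_def)
next
  fix \<gamma> assume "\<gamma> \<in> B"
  then obtain s w where \<gamma>: "\<gamma> = germ n \<alpha> s w" "s \<in> ISem n \<alpha>" "w \<in> cyl (mu s)"
    using assms(1) by (auto simp: compact_open_bisection_def Groupoid_def)
  then have "\<forall>\<beta>. germ n \<alpha> s w \<noteq> germ n \<alpha> ([], iota n \<alpha> \<beta>, []) ones"
    using assms(2) \<open>\<gamma> \<in> B\<close> by auto
  then obtain L M where L: "length (mu s) \<le> L"
    and disj: "Theta n \<alpha> s (cyl (stake L w)) \<inter> (\<Union>g\<in>N0 n \<alpha>. Um n \<alpha> M g) = {}"
    using Theta_disjoint_Um[OF \<gamma>(2,3)] by blast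
  have "openin (germ_top n \<alpha>) (Theta n \<alpha> s (cyl (stake L w)))"
    using openin_Theta[OF \<gamma>(2) cyl_stake_subset[OF L \<gamma>(3)] cantor_open_cyl] .
  moreover have "\<gamma> \<in> Theta n \<alpha> s (cyl (stake L w))"
    by (simp add: Theta_def \<gamma>(1) mem_cyl_iff_stake)
  ultimately show "\<exists>V M. openin (germ_top n \<alpha>) V \<and> \<gamma> \<in> V \<and> V \<inter> (\<Union>g\<in>N0 n \<alpha>. Um n \<alpha> M g) = {}"
    using disj by blast
qed

lemma eventually_Um_spanned_indicator:
  assumes "compact_open_bisection n \<alpha> B"
  shows "\<forall>\<^sub>F m in sequentially. Um_spanned n \<alpha> m (indicator B :: germ \<Rightarrow> 'k::field)"
proof (cases "\<exists>\<beta>. germ n \<alpha> ([], iota n \<alpha> \<beta>, []) ones \<in> B")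
  case True
  then obtain \<beta> where zB: "germ n \<alpha> ([], iota n \<alpha> \<beta>, []) ones \<in> B" by blast
  have "openin (germ_top n \<alpha>) B" using assms by (simp add: compact_open_bisection_def)
  then obtain m0 where m0: "Um n \<alpha> m0 (iota n \<alpha> \<beta>) \<subseteq> B"
    using Um_subset_open[OF _ Ggrp.Giota zB] by blast
  have "Um_spanned n \<alpha> m (indicator B :: germ \<Rightarrow> 'k)" if "m0 \<le> m" for m
  proof -
    have sub: "Um n \<alpha> m (iota n \<alpha> \<beta>) \<subseteq> B" using Um_antimono[OF that] m0 by blast
    have B_iff: "\<gamma> \<in> B \<longleftrightarrow> \<gamma> \<in> Um n \<alpha> m (iota n \<alpha> \<beta>)"
      if \<gamma>: "\<gamma> \<in> (\<Union>g\<in>N0 n \<alpha>. Um n \<alpha> m g)" for \<gamma>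
    proof
      assume "\<gamma> \<in> B"
      obtain x h where x: "x \<in> cyl (replicate m True)" "\<gamma> = germ n \<alpha> ([], iota n \<alpha> h, []) x"
        using \<gamma> by (auto simp: N0_def mem_Um_iff)
      define \<delta> where "\<delta> = germ n \<alpha> ([], iota n \<alpha> \<beta>, []) x"
      have "\<delta> \<in> Um n \<alpha> m (iota n \<alpha> \<beta>)" using x(1) by (auto simp: \<delta>_def mem_Um_iff)
      moreover have "src \<gamma> = src \<delta>"
        using x(2) by (simp add: \<delta>_def src_germ Ggrp.Giota)
      moreover have "inj_on src B"
        using assms by (simp add: compact_open_bisection_def)
      ultimately have "\<gamma> = \<delta>"
        using sub \<open>\<gamma> \<in> B\<close> by (blast dest: inj_onD)
      then show "\<gamma> \<in> Um n \<alpha> m (iota n \<alpha> \<beta>)" using \<open>\<delta> \<in> Um n \<alpha> m (iota n \<alpha> \<beta>)\<close> by simp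
    qed (use sub in blast)
    have sum_eq: "(\<Sum>g\<in>N0 n \<alpha>. (if g = iota n \<alpha> \<beta> then 1 else 0) * indicator (Um n \<alpha> m g) \<gamma>) =
        (indicator (Um n \<alpha> m (iota n \<alpha> \<beta>)) \<gamma> :: 'k)" for \<gamma>
    proof -
      have "(\<Sum>g\<in>N0 n \<alpha>. (if g = iota n \<alpha> \<beta> then 1 else 0) * indicator (Um n \<alpha> m g) \<gamma>) =
          (\<Sum>g\<in>N0 n \<alpha>. if g = iota n \<alpha> \<beta> then indicator (Um n \<alpha> m g) \<gamma> else (0::'k))"
        by (rule sum.cong) simp_all
      then show ?thesis by (simp add: N0_def)
    qed
    have "(indicator B \<gamma> :: 'k) =
        (\<Sum>g\<in>N0 n \<alpha>. (if g = iota n \<alpha> \<beta> then 1 else 0) * indicator (Um n \<alpha> m g) \<gamma>)"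
      if "\<gamma> \<in> (\<Union>g\<in>N0 n \<alpha>. Um n \<alpha> m g)" for \<gamma>
    proof -
      have "indicator B \<gamma> = (indicator (Um n \<alpha> m (iota n \<alpha> \<beta>)) \<gamma> :: 'k)"
        using B_iff[OF that] by (simp add: indicator_def)
      then show ?thesis by (simp only: sum_eq)
    qed
    then show ?thesis
      unfolding Um_spanned_def by (intro exI[of _ "\<lambda>g. if g = iota n \<alpha> \<beta> then 1 else 0"]) blast
  qed
  then show ?thesis by (auto simp: eventually_sequentially)
next
  case False
  then obtain M where M: "B \<inter> (\<Union>g\<in>N0 n \<alpha>. Um n \<alpha> M g) = {}"
    using bisection_disjoint_Um[OF assms] by blast
  have "Um_spanned n \<alpha> m (indicator B :: germ \<Rightarrow> 'k)" if "M \<le> m" for m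
  proof -
    have "(\<Union>g\<in>N0 n \<alpha>. Um n \<alpha> m g) \<subseteq> (\<Union>g\<in>N0 n \<alpha>. Um n \<alpha> M g)"
      using decseqD[OF decseq_Um_union[of n \<alpha>] that] by simp
    then have "(indicator B \<gamma> :: 'k) = (\<Sum>g\<in>N0 n \<alpha>. 0 * indicator (Um n \<alpha> m g) \<gamma>)"
      if "\<gamma> \<in> (\<Union>g\<in>N0 n \<alpha>. Um n \<alpha> m g)" for \<gamma>
      using M that by (simp add: indicator_def) blast
    then show ?thesis
      unfolding Um_spanned_def by (intro exI[of _ "\<lambda>_. 0"]) blast
  qed
  then show ?thesis by (auto simp: eventually_sequentially)
qed

end

end

theorem mainTheorem9:
  fixes n :: nat and \<alpha> :: "'f::{field,finite}" and f :: "germ \<Rightarrow> 'k::field"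
  assumes "n \<ge> 2"
    and "CARD('f) = 2 ^ n"
    and "\<forall>x::'f. x \<noteq> 0 \<longrightarrow> (\<exists>k::nat. x = \<alpha> ^ k)"
    and "f \<in> steinberg n \<alpha>"
  shows "\<exists>m\<ge>1. \<exists>c :: taut \<Rightarrow> 'k.
           \<forall>\<gamma> \<in> (\<Union>g\<in>N0 n \<alpha>. Um n \<alpha> m g).
             f \<gamma> = (\<Sum>g\<in>N0 n \<alpha>. c g * indicator (Um n \<alpha> m g) \<gamma>)"
proof -
  interpret gf2n n \<alpha>
    using assms(1,2) by unfold_locales simp_all
  have "(2::nat) ^ 1 < 2 ^ n" using assms(1) by (intro power_strict_increasing) auto
  then have "\<alpha> \<noteq> 0" using generator_nonzero[OF _ assms(3)] assms(2) by simp
  obtain I :: "nat set" and c B where I: "finite I" "\<forall>i\<in>I. compact_open_bisection n \<alpha> (B i)"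
    and f: "f = (\<lambda>\<gamma>. \<Sum>i\<in>I. c i * indicator (B i) \<gamma>)"
    using assms(4) unfolding steinberg_def by blast
  have "\<forall>i\<in>I. \<forall>\<^sub>F m in sequentially. Um_spanned n \<alpha> m (indicator (B i) :: germ \<Rightarrow> 'k)"
    using I(2) eventually_Um_spanned_indicator[OF \<open>\<alpha> \<noteq> 0\<close>] by blast
  then have "\<forall>\<^sub>F m in sequentially. \<forall>i\<in>I. Um_spanned n \<alpha> m (indicator (B i) :: germ \<Rightarrow> 'k)"
    by (rule eventually_ball_finite[OF I(1)])
  then have "\<forall>\<^sub>F m in sequentially. 1 \<le> m \<and> Um_spanned n \<alpha> m f"
    using eventually_ge_at_top[of 1]
  proof eventually_elim
    case (elim m)
    then show ?case
      unfolding f by (intro conjI Um_spanned_sum[OF I(1)]) auto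
  qed
  then obtain m where "1 \<le> m" "Um_spanned n \<alpha> m f"
    by (auto simp: eventually_sequentially)
  then show ?thesis unfolding Um_spanned_def by blast
qed

end
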